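(* Let $\mathcal{T}$ be a single-elimination tournament, $u\in V(\mathcal{T})$, $\mathcal{B}_u$ a non-empty set of brackets of $\mathcal{T}_u$, and $\mathcal{A}$ a partition of $P(\mathcal{T})\setminus P(u)$ such that for every $a\in P(\mathcal{T})\setminus P(u)$, the part $A\in\mathcal{A}$ with $a\in A$ contains some $b\in A\setminus\{a\}$ with $b\in P(x)$ for every match $x$ with $a\in P(x)$. Then there exists a set of brackets $\mathcal{B}$ of $\mathcal{T}$ with \[|\mathcal{B}|=|P(\mathcal{T})\setminus P(u)|+\max\{0,|\mathcal{B}_u|-|\mathcal{A}|\}\] such that, for every scoring system $\sigma$ of $\mathcal{T}$, $\mathcal{B}$ is $\sigma$-resolving whenever $\mathcal{B}_u$ is $\sigma_u$-resolving.
   Context: A single-elimination tournament is a finite directed graph $\mathcal{T}$ such that: (a) $\mathcal{T}$ has exactly one sink (vertex with no out-neighbours); (b) every non-sink vertex has exactly one out-neighbour; (c) $\mathcal{T}$ has no directed cycles; (d) $|N^-(v)|\ne 1$ for every vertex $v$, where $N^-(v)$ denotes the set of in-neighbours of $v$. The players $P(\mathcal{T})$ are the sources and the matches are $M(\mathcal{T})=V(\mathcal{T})\setminus P(\mathcal{T})$. For a vertex $u$, $P(u)$ is the set of players $a$ for which there is a directed walk from $a$ to $u$ (length $0$ allowed). For $u\in V(\mathcal{T})$, $\mathcal{T}_u$ is the digraph obtained from $\mathcal{T}$ by deleting every vertex $v$ with $P(v)\not\subseteq P(u)$ (it is a single-elimination tournament), and $\sigma_u$ is the restriction of $\sigma$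 to $M(\mathcal{T})\cap V(\mathcal{T}_u)=M(\mathcal{T}_u)$. A bracket is a function $B:V(\mathcal{T})\to P(\mathcal{T})$ with $B(a)=a$ for every player $a$ and $B(x)\in\{B(u):u\in N^-(x)\}$ for every match $x$. A scoring system is any function $\sigma:M(\mathcal{T})\to\mathbb{R}_{>0}$. For brackets $B,B'$ let $\mathrm{score}_\sigma(B,B')=\sum_{x\in M(\mathcal{T}):\,B(x)=B'(x)}\sigma(x)$. A set of brackets $\mathcal{B}$ is $\sigma$-resolving if for every pair of distinct brackets $B\ne B'$ there is $B_i\in\mathcal{B}$ with $\mathrm{score}_\sigma(B_i,B)\ne\mathrm{score}_\sigma(B_i,B')$ (and analogously for $\mathcal{T}_u,\sigma_u$). *)

theory Defs
  imports Complex_Main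
begin

definition out_nbrs :: "('v \<times> 'v) set \<Rightarrow> 'v \<Rightarrow> 'v set" where
  "out_nbrs E v = {w. (v, w) \<in> E}"

definition in_nbrs :: "('v \<times> 'v) set \<Rightarrow> 'v \<Rightarrow> 'v set" where
  "in_nbrs E v = {w. (w, v) \<in> E}"

definition is_SET :: "'v set \<Rightarrow> ('v \<times> 'v) set \<Rightarrow> bool" where
  "is_SET V E \<longleftrightarrow> finite V \<and> E \<subseteq> V \<times> V
     \<and> (\<exists>!s. s \<in> V \<and> out_nbrs E s = {})
     \<and> (\<forall>v\<in>V. out_nbrs E v \<noteq> {} \<longrightarrow> card (out_nbrs E v) = 1)
     \<and> acyclic E
     \<and> (\<forall>v\<in>V. card (in_nbrs E v) \<noteq> 1)"

definition players :: "'v set \<Rightarrow> ('v \<times> 'v) set \<Rightarrow> 'v set" where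
  "players V E = {v \<in> V. in_nbrs E v = {}}"

definition matches :: "'v set \<Rightarrow> ('v \<times> 'v) set \<Rightarrow> 'v set" where
  "matches V E = V - players V E"

definition Pset :: "'v set \<Rightarrow> ('v \<times> 'v) set \<Rightarrow> 'v \<Rightarrow> 'v set" where
  "Pset V E u = {a \<in> players V E. (a, u) \<in> E\<^sup>*}"

definition sub_V :: "'v set \<Rightarrow> ('v \<times> 'v) set \<Rightarrow> 'v \<Rightarrow> 'v set" where
  "sub_V V E u = {v \<in> V. Pset V E v \<subseteq> Pset V E u}"

definition sub_E :: "'v set \<Rightarrow> ('v \<times> 'v) set \<Rightarrow> 'v \<Rightarrow> ('v \<times> 'v) set" where
  "sub_E V E u = E \<inter> (sub_V V E u \<times> sub_V V E u)"

definition is_bracket :: "'v set \<Rightarrow> ('v \<times> 'v) set \<Rightarrow> ('v \<Rightarrow> 'v) \<Rightarrow> bool" where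
  "is_bracket V E B \<longleftrightarrow>
     (\<forall>a\<in>players V E. B a = a)
     \<and> (\<forall>x\<in>matches V E. B x \<in> B ` in_nbrs E x)
     \<and> (\<forall>v. v \<notin> V \<longrightarrow> B v = undefined)"

definition scoring_system :: "'v set \<Rightarrow> ('v \<times> 'v) set \<Rightarrow> ('v \<Rightarrow> real) \<Rightarrow> bool" where
  "scoring_system V E \<sigma> \<longleftrightarrow> (\<forall>x\<in>matches V E. \<sigma> x > 0)"

definition score :: "'v set \<Rightarrow> ('v \<times> 'v) set \<Rightarrow> ('v \<Rightarrow> real) \<Rightarrow> ('v \<Rightarrow> 'v) \<Rightarrow> ('v \<Rightarrow> 'v) \<Rightarrow> real" where
  "score V E \<sigma> B B' = (\<Sum>x\<in>{x \<in> matches V E. B x = B' x}. \<sigma> x)"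

definition resolving :: "'v set \<Rightarrow> ('v \<times> 'v) set \<Rightarrow> ('v \<Rightarrow> real) \<Rightarrow> ('v \<Rightarrow> 'v) set \<Rightarrow> bool" where
  "resolving V E \<sigma> \<B> \<longleftrightarrow>
     (\<forall>B B'. is_bracket V E B \<longrightarrow> is_bracket V E B' \<longrightarrow> B \<noteq> B' \<longrightarrow>
        (\<exists>Bi\<in>\<B>. score V E \<sigma> Bi B \<noteq> score V E \<sigma> Bi B'))"

end

theory Submission
  imports Defs "HOL-Library.FuncSet" "HOL-Library.Product_Lexorder"
begin

text \<open>
  Call the players outside \<open>P(u)\<close> outer.  Each part of \<open>\<A>\<close> is assigned a bracket of
  \<open>\<B>\<^sub>u\<close>, injectively when \<open>|\<A>| \<le> |\<B>\<^sub>u|\<close>; the unassigned ones are spare.  Every outer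
  player \<open>a\<close> gets the bracket that agrees with the bracket of its part inside \<open>\<T>\<^sub>u\<close> and lets
  every match outside \<open>\<T>\<^sub>u\<close> be won by the contender of highest priority, the ancestors of
  \<open>a\<close> in a forest on its part coming first; every spare bracket is extended in the same way
  without preferred players.

  In the forest, the parent of a non-root \<open>a\<close> plays all matches of \<open>a\<close>.  So the brackets of
  \<open>a\<close> and of its parent differ exactly on the matches of \<open>a\<close>, won by \<open>a\<close> in one and by the
  parent in the other, and since no bracket lets both of them win a match of \<open>a\<close>, score
  differences determine the matches won by every non-root.  A root has a twin, a child playing
  the same matches, whose bracket lets only non-roots win outside \<open>\<T>\<^sub>u\<close>; hence it determines
  the score inside \<open>\<T>\<^sub>u\<close> against the bracket of the part, and then the bracket of the root
  determines its wins.  Spare brackets also let only non-roots win outside \<open>\<T>\<^sub>u\<close>.  So two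
  brackets with equal scores against the family have the same restriction to \<open>\<T>\<^sub>u\<close>, as
  \<open>\<B>\<^sub>u\<close> is resolving, and the same winners outside it.
\<close>

lemma arg_max_on_max:
  fixes f :: "'a \<Rightarrow> 'b::linorder"
  assumes "finite S" "S \<noteq> {}"
  shows "arg_max_on f S \<in> S" "\<And>y. y \<in> S \<Longrightarrow> f y \<le> f (arg_max_on f S)"
proof -
  obtain c where "c \<in> S" "f c = Max (f ` S)"
    using Max_in[of "f ` S"] assms by fastforce
  then have "is_arg_max f (\<lambda>x. x \<in> S) c"
    using assms by (simp add: is_arg_max_linorder)
  then have "is_arg_max f (\<lambda>x. x \<in> S) (arg_max_on f S)"
    unfolding arg_max_on_def arg_max_def by (rule someI)
  then show "arg_max_on f S \<in> S" "\<And>y. y \<in> S \<Longrightarrow> f y \<le> f (arg_max_on f S)"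
    by (auto simp: is_arg_max_linorder)
qed

lemma arg_max_on_eqI:
  fixes f :: "'a \<Rightarrow> 'b::linorder"
  assumes "finite S" "c \<in> S" "\<And>y. y \<in> S \<Longrightarrow> f y \<le> f c" "inj_on f S"
  shows "arg_max_on f S = c"
proof -
  have "arg_max_on f S \<in> S" "f c \<le> f (arg_max_on f S)"
    using arg_max_on_max[OF assms(1)] assms(2) by auto
  then show ?thesis
    using assms(2-4) by (metis inj_onD order_antisym)
qed

lemma subset_eq_if_sum_eq:
  fixes \<sigma> :: "'a \<Rightarrow> real"
  assumes "A \<subseteq> B" "finite B" "\<And>x. x \<in> B \<Longrightarrow> \<sigma> x > 0" "sum \<sigma> A = sum \<sigma> B"
  shows "A = B"
proof (rule ccontr)
  assume "A \<noteq> B"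
  then have "sum \<sigma> (B - A) > 0"
    using assms by (intro sum_pos) auto
  moreover have "sum \<sigma> B = sum \<sigma> (B - A) + sum \<sigma> A"
    using sum.subset_diff[OF assms(1,2)] .
  ultimately show False
    using assms(4) by simp
qed

lemma nested_eq_if_sum_eq:
  fixes \<sigma> :: "'a \<Rightarrow> real"
  assumes "finite X" "finite Y" "\<And>x. x \<in> X \<union> Y \<Longrightarrow> \<sigma> x > 0"
    and "X \<subseteq> Y \<or> Y \<subseteq> X" and "sum \<sigma> X = sum \<sigma> Y"
  shows "X = Y"
  using assms subset_eq_if_sum_eq[of X Y \<sigma>] subset_eq_if_sum_eq[of Y X \<sigma>] by auto

lemma ex_map_card_Diff_image:
  assumes "finite A" "finite B" "B \<noteq> {}"
  obtains f where "f ` A \<subseteq> B" "card (B - f ` A) = card B - card A"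
proof (cases "card A \<le> card B")
  case True
  then obtain f where f: "f ` A \<subseteq> B" "inj_on f A"
    using card_le_inj[OF assms(1,2)] by blast
  then have "card (B - f ` A) = card B - card A"
    using card_Diff_subset[OF finite_imageI[OF assms(1)]] card_image by metis
  then show ?thesis
    using that f by blast
next
  case False
  then obtain g where g: "g ` B \<subseteq> A" "inj_on g B"
    using card_le_inj[OF assms(2,1)] by fastforce
  obtain b0 where "b0 \<in> B"
    using assms(3) by blast
  define f where "f a = (if a \<in> g ` B then inv_into B g a else b0)" for a
  have "f ` A \<subseteq> B"
    using \<open>b0 \<in> B\<close> by (auto simp: f_def inv_into_into)
  moreover have "B \<subseteq> f ` A"
  proof
    fix b assume "b \<in> B"
    then have "f (g b) = b" "g b \<in> A"
      using g by (auto simp: f_def)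
    then show "b \<in> f ` A"
      by (metis image_eqI)
  qed
  ultimately have "B - f ` A = {}" "card B - card A = 0"
    using False by auto
  then show ?thesis
    using that[OF \<open>f ` A \<subseteq> B\<close>] by (metis card.empty)
qed

lemma bracket_winner_reaches:
  assumes "wf E" "E \<subseteq> V \<times> V" and B: "is_bracket V E B" and "x \<in> V"
  shows "B x \<in> players V E" "(B x, x) \<in> E\<^sup>*"
proof -
  have "B x \<in> players V E \<and> (B x, x) \<in> E\<^sup>*"
    using \<open>x \<in> V\<close>
  proof (induction x rule: wf_induct[OF \<open>wf E\<close>])
    case (1 x)
    show ?case
    proof (cases "x \<in> players V E")
      case True
      then show ?thesis using B by (simp add: is_bracket_def)
    next
      case False
      then have "x \<in> matches V E" using 1 by (simp add: matches_def)
      then obtain d where d: "(d, x) \<in> E" "B x = B d"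
        using B by (auto simp: is_bracket_def in_nbrs_def)
      then have "B d \<in> players V E \<and> (B d, d) \<in> E\<^sup>*"
        using 1 assms(2) by blast
      then show ?thesis
        using d by (metis rtrancl.rtrancl_into_rtrancl)
    qed
  qed
  then show "B x \<in> players V E" "(B x, x) \<in> E\<^sup>*" by auto
qed

section \<open>Single-elimination tournaments\<close>

locale tournament =
  fixes V :: "'v set" and E :: "('v \<times> 'v) set"
  assumes is_SET: "is_SET V E"
begin

abbreviation "Pl \<equiv> players V E"
abbreviation "M \<equiv> matches V E"

lemma finite_V: "finite V"
  using is_SET by (simp add: is_SET_def)

lemma E_subset: "E \<subseteq> V \<times> V"
  using is_SET by (simp add: is_SET_def)

lemma acyclic_E: "acyclic E"
  using is_SET by (simp add: is_SET_def)

lemma wf_E: "wf E"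
  using finite_acyclic_wf finite_subset[OF E_subset] finite_V acyclic_E by blast

lemma wf_converse_E: "wf (E\<inverse>)"
  using finite_acyclic_wf_converse finite_subset[OF E_subset] finite_V acyclic_E by blast

lemma finite_M: "finite M"
  using finite_V by (simp add: matches_def)

lemma players_subset: "Pl \<subseteq> V"
  by (auto simp: players_def)

lemma matches_subset: "M \<subseteq> V"
  by (auto simp: matches_def)

lemma matches_iff: "x \<in> M \<longleftrightarrow> x \<in> V \<and> in_nbrs E x \<noteq> {}"
  by (auto simp: matches_def players_def)

lemma out_edge_unique:
  assumes "(v, w) \<in> E" "(v, w') \<in> E"
  shows "w = w'"
proof -
  have "v \<in> V" "out_nbrs E v \<noteq> {}"
    using assms E_subset by (auto simp: out_nbrs_def)
  then have "card (out_nbrs E v) = 1"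
    using is_SET by (auto simp: is_SET_def)
  then obtain z where "out_nbrs E v = {z}"
    using card_1_singletonE by blast
  then have "w \<in> {z}" "w' \<in> {z}"
    using assms by (auto simp: out_nbrs_def)
  then show ?thesis
    by simp
qed

lemma reachable_linear:
  assumes "(a, b) \<in> E\<^sup>*" "(a, c) \<in> E\<^sup>*"
  shows "(b, c) \<in> E\<^sup>* \<or> (c, b) \<in> E\<^sup>*"
  using assms
proof (induction arbitrary: c rule: converse_rtrancl_induct)
  case base
  then show ?case by simp
next
  case (step a a')
  from step.prems show ?case
  proof (cases rule: converse_rtranclE)
    case base
    then show ?thesis
      using step.hyps by (meson converse_rtrancl_into_rtrancl)
  next
    case (step a'')
    then have "a'' = a'"
      using out_edge_unique \<open>(a, a') \<in> E\<close> by blast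
    then show ?thesis
      using step.IH step by blast
  qed
qed

lemma reachable_player_eq:
  assumes "p \<in> Pl" "(b, p) \<in> E\<^sup>*"
  shows "b = p"
  using assms(2)
proof (cases rule: rtranclE)
  case (step y)
  then show ?thesis
    using assms(1) by (auto simp: players_def in_nbrs_def)
qed simp

lemma in_edges_reachable_eq:
  assumes "(c1, x) \<in> E" "(c2, x) \<in> E" "(a, c1) \<in> E\<^sup>*" "(a, c2) \<in> E\<^sup>*"
  shows "c1 = c2"
proof -
  have "c1 = c2" if "(c1, x) \<in> E" "(c2, x) \<in> E" "(c1, c2) \<in> E\<^sup>*" for c1 c2
  proof (rule ccontr)
    assume "c1 \<noteq> c2"
    with \<open>(c1, c2) \<in> E\<^sup>*\<close> obtain y where "(c1, y) \<in> E" "(y, c2) \<in> E\<^sup>*"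
      by (metis converse_rtranclE)
    moreover have "y = x"
      using out_edge_unique \<open>(c1, y) \<in> E\<close> \<open>(c1, x) \<in> E\<close> by blast
    ultimately have "(x, x) \<in> E\<^sup>+"
      using \<open>(c2, x) \<in> E\<close> by (meson rtrancl_into_trancl1)
    then show False
      using acyclic_E by (simp add: acyclic_def)
  qed
  then show ?thesis
    using reachable_linear[OF assms(3,4)] assms(1,2) by metis
qed

lemma sink_reachable: obtains z where "z \<in> V" "\<And>v. v \<in> V \<Longrightarrow> (v, z) \<in> E\<^sup>*"
proof -
  obtain s where s: "s \<in> V" "out_nbrs E s = {}"
    using is_SET by (auto simp: is_SET_def)
  have unique: "t = s" if "t \<in> V" "out_nbrs E t = {}" for t
    using is_SET s that by (auto simp: is_SET_def)
  have "v \<in> V \<longrightarrow> (v, s) \<in> E\<^sup>*" for v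
  proof (induction v rule: wf_induct[OF wf_converse_E])
    case (1 v)
    show ?case
    proof
      assume v: "v \<in> V"
      show "(v, s) \<in> E\<^sup>*"
      proof (cases "out_nbrs E v = {}")
        case True
        then show ?thesis using unique v by simp
      next
        case False
        then obtain w where "(v, w) \<in> E" by (auto simp: out_nbrs_def)
        moreover have "w \<in> V" using calculation E_subset by auto
        ultimately show ?thesis
          using 1 by (meson converse_iff converse_rtrancl_into_rtrancl)
      qed
    qed
  qed
  then show ?thesis
    using that s by blast
qed

definition matches_of :: "'v \<Rightarrow> 'v set" where
  "matches_of a = {x \<in> M. (a, x) \<in> E\<^sup>*}"

definition wins :: "('v \<Rightarrow> 'v) \<Rightarrow> 'v \<Rightarrow> 'v set" where
  "wins B c = {x \<in> M. B x = c}"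

lemma wins_iff: "x \<in> M \<Longrightarrow> x \<in> wins B c \<longleftrightarrow> B x = c"
  by (simp add: wins_def)

lemma finite_matches_of: "finite (matches_of a)"
  using finite_M by (simp add: matches_of_def)

lemma finite_wins: "finite (wins B c)"
  using finite_M by (simp add: wins_def)

lemma wins_subset_matches_of:
  assumes "is_bracket V E B"
  shows "wins B c \<subseteq> matches_of c"
  using bracket_winner_reaches[OF wf_E E_subset assms] matches_subset by (auto simp: wins_def matches_of_def)

lemma bracket_wins_below:
  assumes B: "is_bracket V E B" and "(y, x) \<in> E\<^sup>*"
    and "B x = c" "(c, y) \<in> E\<^sup>*" "x \<in> V"
  shows "B y = c"
  using assms(2-)
proof (induction x rule: rtrancl_induct)
  case base
  then show ?case by simp
next
  case (step z x)
  have "x \<in> M"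
    using step.hyps(2) E_subset by (auto simp: matches_iff in_nbrs_def)
  then obtain d where d: "(d, x) \<in> E" "B d = c"
    using B step.prems(1) by (auto simp: is_bracket_def in_nbrs_def)
  then have "(c, d) \<in> E\<^sup>*"
    using bracket_winner_reaches(2)[OF wf_E E_subset B, of d] E_subset by auto
  then have "d = z"
    using in_edges_reachable_eq d(1) step.hyps step.prems(2) by (meson rtrancl_trans)
  then show ?case
    using step d E_subset by auto
qed

lemma wins_nested:
  assumes B: "is_bracket V E B" and B': "is_bracket V E B'"
  shows "wins B c \<subseteq> wins B' c \<or> wins B' c \<subseteq> wins B c"
proof (rule ccontr)
  assume "\<not> ?thesis"
  then obtain x y where x: "x \<in> M" "B x = c" "B' x \<noteq> c" and y: "y \<in> M" "B' y = c" "B y \<noteq> c"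
    by (auto simp: wins_def)
  have "(c, x) \<in> E\<^sup>*" "(c, y) \<in> E\<^sup>*"
    using bracket_winner_reaches(2)[OF wf_E E_subset B, of x] bracket_winner_reaches(2)[OF wf_E E_subset B', of y] x y matches_subset
    by auto
  then show False
    using reachable_linear bracket_wins_below[OF B] bracket_wins_below[OF B'] x y matches_subset
    by blast
qed

text \<open>Whoever wins the later of two matches of \<open>a\<close> also wins the earlier one, as both
  \<open>a\<close> and \<open>b\<close> play it.\<close>

lemma not_both_win_matches_of:
  assumes X: "is_bracket V E X" and "matches_of a \<subseteq> matches_of b" "a \<noteq> b"
  shows "wins X a \<inter> matches_of a = {} \<or> wins X b \<inter> matches_of a = {}"
proof (rule ccontr)
  assume "\<not> ?thesis"
  then obtain x y where x: "x \<in> matches_of a" "X x = a" and y: "y \<in> matches_of a" "X y = b"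
    by (auto simp: wins_def)
  have "(a, x) \<in> E\<^sup>*" "(a, y) \<in> E\<^sup>*" "(b, x) \<in> E\<^sup>*" "x \<in> V" "y \<in> V"
    using x y assms(2) matches_subset by (auto simp: matches_of_def)
  then show False
    using reachable_linear bracket_wins_below[OF X] x y \<open>a \<noteq> b\<close> by metis
qed

lemma score_eq_sum: "score V E \<sigma> B X = (\<Sum>x\<in>M. if B x = X x then \<sigma> x else 0)"
  by (simp add: score_def sum.inter_filter[OF finite_M])

lemma sum_if_eq_wins: "(\<Sum>x\<in>matches_of a. if X x = c then \<sigma> x else 0) = sum \<sigma> (wins X c \<inter> matches_of a)"
proof -
  have "wins X c \<inter> matches_of a = {x \<in> matches_of a. X x = c}"
    by (auto simp: wins_def matches_of_def)
  then show ?thesis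
    by (simp add: sum.inter_filter[OF finite_matches_of])
qed

end

locale bracket_extension = tournament V E for V :: "'v set" and E +
  fixes u :: 'v and Bu :: "('v \<Rightarrow> 'v) set" and \<A> :: "'v set set"
  assumes u_in_V: "u \<in> V"
    and Bu_brackets: "\<forall>B\<in>Bu. is_bracket (sub_V V E u) (sub_E V E u) B"
    and Bu_ne: "Bu \<noteq> {}"
    and A_part: "\<Union>\<A> = players V E - Pset V E u"
    and A_nonempty: "\<forall>A\<in>\<A>. A \<noteq> {}"
    and A_disj: "\<forall>A\<in>\<A>. \<forall>A'\<in>\<A>. A \<noteq> A' \<longrightarrow> A \<inter> A' = {}"
    and A_cond: "\<forall>a\<in>players V E - Pset V E u. \<forall>A\<in>\<A>. a \<in> A \<longrightarrow>
         (\<exists>b\<in>A - {a}. \<forall>x\<in>matches V E. a \<in> Pset V E x \<longrightarrow> b \<in> Pset V E x)"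
begin

abbreviation "Vu \<equiv> sub_V V E u"
abbreviation "Eu \<equiv> sub_E V E u"
abbreviation "outer \<equiv> Pl - Pset V E u"

lemma finite_outer: "finite outer"
  using finite_V by (simp add: players_def)

lemma sub_V_iff: "x \<in> Vu \<longleftrightarrow> x \<in> V \<and> Pset V E x \<subseteq> Pset V E u"
  by (simp add: sub_V_def)

lemma Vu_subset: "Vu \<subseteq> V"
  by (auto simp: sub_V_iff)

lemma u_in_Vu: "u \<in> Vu"
  using u_in_V by (simp add: sub_V_iff)

lemma Pset_mono: "(x, y) \<in> E\<^sup>* \<Longrightarrow> Pset V E x \<subseteq> Pset V E y"
  by (auto simp: Pset_def)

lemma in_edge_Vu: "x \<in> Vu \<Longrightarrow> (d, x) \<in> E \<Longrightarrow> d \<in> Vu"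
  using Pset_mono[of d x] E_subset by (auto simp: sub_V_iff)

lemma in_nbrs_Eu: "x \<in> Vu \<Longrightarrow> in_nbrs Eu x = in_nbrs E x"
  using in_edge_Vu by (auto simp: in_nbrs_def sub_E_def)

lemma players_Eu: "players Vu Eu = Pl \<inter> Vu"
  using in_nbrs_Eu Vu_subset by (auto simp: players_def)

lemma matches_Eu: "matches Vu Eu = M \<inter> Vu"
  using players_Eu Vu_subset by (auto simp: matches_def)

lemma outer_reaches_not_Vu: "a \<in> outer \<Longrightarrow> (a, x) \<in> E\<^sup>* \<Longrightarrow> x \<notin> Vu"
  by (auto simp: sub_V_iff Pset_def)

lemma matches_of_outer: "a \<in> outer \<Longrightarrow> matches_of a \<subseteq> M - Vu"
  using outer_reaches_not_Vu by (auto simp: matches_of_def)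

lemma bracket_restrict:
  assumes B: "is_bracket V E B"
  shows "is_bracket Vu Eu (restrict B Vu)"
  unfolding is_bracket_def
proof (intro conjI ballI allI impI)
  fix a assume "a \<in> players Vu Eu"
  then show "restrict B Vu a = a"
    using B players_Eu by (auto simp: is_bracket_def)
next
  fix x assume "x \<in> matches Vu Eu"
  then have x: "x \<in> Vu" "x \<in> M"
    using matches_Eu by auto
  then obtain d where "d \<in> in_nbrs E x" "B x = B d"
    using B by (auto simp: is_bracket_def)
  moreover have "d \<in> Vu"
    using calculation in_edge_Vu x by (auto simp: in_nbrs_def)
  ultimately show "restrict B Vu x \<in> restrict B Vu ` in_nbrs Eu x"
    using x in_nbrs_Eu by auto
qed auto

lemma Bu_extensional: "K \<in> Bu \<Longrightarrow> K \<in> extensional Vu"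
  using Bu_brackets by (auto simp: is_bracket_def extensional_def)

lemma finite_Bu: "finite Bu"
proof (rule finite_subset)
  show "Bu \<subseteq> Vu \<rightarrow>\<^sub>E Pl"
  proof
    fix K assume K: "K \<in> Bu"
    have "wf Eu" "Eu \<subseteq> Vu \<times> Vu"
      using wf_subset[OF wf_E] by (auto simp: sub_E_def)
    then have "K x \<in> Pl" if "x \<in> Vu" for x
      using bracket_winner_reaches(1)[of Eu Vu K x] K Bu_brackets players_Eu that by auto
    then show "K \<in> Vu \<rightarrow>\<^sub>E Pl"
      using Bu_extensional[OF K] by (simp add: PiE_iff)
  qed
  show "finite (Vu \<rightarrow>\<^sub>E Pl)"
    using finite_V Vu_subset players_subset by (intro finite_PiE) (auto intro: finite_subset)
qed

section \<open>A forest on each part\<close>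

lemma parts_subset_outer: "A \<in> \<A> \<Longrightarrow> A \<subseteq> outer"
  using A_part by blast

lemma finite_parts: "finite \<A>"
  using finite_outer A_part by (simp add: finite_UnionD)

definition part :: "'v \<Rightarrow> 'v set" where
  "part a = (SOME A. A \<in> \<A> \<and> a \<in> A)"

lemma part_spec:
  assumes "a \<in> outer"
  shows "part a \<in> \<A>" "a \<in> part a"
proof -
  have "\<exists>A. A \<in> \<A> \<and> a \<in> A"
    using A_part assms by blast
  then show "part a \<in> \<A>" "a \<in> part a"
    unfolding part_def by (metis (mono_tags, lifting) someI_ex)+
qed

lemma part_eq: "a \<in> outer \<Longrightarrow> A \<in> \<A> \<Longrightarrow> a \<in> A \<Longrightarrow> part a = A"
  using part_spec A_disj by blast

lemma part_subset_outer: "a \<in> outer \<Longrightarrow> part a \<subseteq> outer"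
  using part_spec parts_subset_outer by blast

lemma partner_exists:
  assumes "a \<in> outer"
  shows "\<exists>b\<in>part a - {a}. matches_of a \<subseteq> matches_of b"
proof -
  obtain b where "b \<in> part a - {a}" "\<forall>x\<in>M. a \<in> Pset V E x \<longrightarrow> b \<in> Pset V E x"
    using A_cond part_spec[OF assms] assms by blast
  moreover have "matches_of a \<subseteq> matches_of b"
    using calculation(2) assms by (auto simp: matches_of_def Pset_def)
  ultimately show ?thesis
    by blast
qed

definition index :: "'v \<Rightarrow> nat" where
  "index = (SOME f. inj_on f outer)"

definition rank :: "'v \<Rightarrow> int \<times> nat" where
  "rank a = (- int (card (matches_of a)), index a)"

lemma inj_on_rank: "inj_on rank outer"
proof -
  have "inj_on index outer"
    unfolding index_def using finite_imp_inj_to_nat_seg[OF finite_outer] by (metis someI_ex)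
  then show ?thesis
    by (auto simp: rank_def inj_on_def)
qed

lemma rank_less_if_card_less: "card (matches_of a) < card (matches_of b) \<Longrightarrow> rank b < rank a"
  by (simp add: rank_def)

definition parent_cands :: "'v \<Rightarrow> 'v set" where
  "parent_cands a = {b \<in> part a - {a}. matches_of a \<subseteq> matches_of b \<and> rank b < rank a}"

definition roots :: "'v set" where
  "roots = {a \<in> outer. parent_cands a = {}}"

definition nonroots :: "'v set" where
  "nonroots = outer - roots"

definition twin :: "'v \<Rightarrow> 'v" where
  "twin r = (SOME b. b \<in> part r - {r} \<and> matches_of b = matches_of r \<and> rank r < rank b)"

lemma roots_subset: "roots \<subseteq> outer"
  by (auto simp: roots_def)

lemma nonroots_subset: "nonroots \<subseteq> outer"
  by (auto simp: nonroots_def)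

lemma twin_spec:
  assumes r: "r \<in> roots"
  shows "twin r \<in> part r - {r}" "matches_of (twin r) = matches_of r" "rank r < rank (twin r)"
proof -
  have r_outer: "r \<in> outer" and no_parent: "parent_cands r = {}"
    using r by (auto simp: roots_def)
  obtain b where b: "b \<in> part r - {r}" "matches_of r \<subseteq> matches_of b"
    using partner_exists[OF r_outer] by blast
  have b_outer: "b \<in> outer"
    using b part_subset_outer[OF r_outer] by blast
  have "\<not> rank b < rank r"
    using no_parent b by (auto simp: parent_cands_def)
  moreover have "rank b \<noteq> rank r"
    using inj_on_rank b_outer r_outer b(1) by (auto dest: inj_onD)
  ultimately have less: "rank r < rank b"
    by simp
  then have "\<not> card (matches_of r) < card (matches_of b)"
    using rank_less_if_card_less by fastforce
  then have "matches_of b = matches_of r"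
    using b(2) finite_matches_of by (metis card_subset_eq card_mono le_neq_implies_less)
  then have "\<exists>b. b \<in> part r - {r} \<and> matches_of b = matches_of r \<and> rank r < rank b"
    using b less by blast
  then show "twin r \<in> part r - {r}" "matches_of (twin r) = matches_of r" "rank r < rank (twin r)"
    unfolding twin_def by (metis (mono_tags, lifting) someI_ex)+
qed

lemma twin_outer: "r \<in> roots \<Longrightarrow> twin r \<in> outer"
  using twin_spec(1) part_subset_outer roots_subset by blast

lemma part_twin: "r \<in> roots \<Longrightarrow> part (twin r) = part r"
  using twin_spec(1) part_eq part_spec twin_outer roots_subset by (metis DiffD1 subsetD)

lemma root_parent_cand_twin: "r \<in> roots \<Longrightarrow> r \<in> parent_cands (twin r)"
  using twin_spec[of r] part_twin[of r] part_spec[of r] roots_subset by (auto simp: parent_cands_def)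

lemma twin_nonroot: "r \<in> roots \<Longrightarrow> twin r \<in> nonroots"
  using root_parent_cand_twin twin_outer by (auto simp: nonroots_def roots_def)

lemma inj_on_twin: "inj_on twin roots"
proof
  fix r r' assume r: "r \<in> roots" "r' \<in> roots" and eq: "twin r = twin r'"
  show "r = r'"
  proof (rule ccontr)
    assume "r \<noteq> r'"
    moreover have "rank r \<noteq> rank r'"
      using inj_on_rank r roots_subset calculation by (auto dest: inj_onD)
    moreover have "matches_of r = matches_of r'" "part r = part r'"
      using twin_spec(2) part_twin r eq by metis+
    moreover have "r \<in> part r" "r' \<in> part r'"
      using part_spec r roots_subset by auto
    ultimately have "r \<in> parent_cands r' \<or> r' \<in> parent_cands r"
      by (auto simp: parent_cands_def)
    then show False
      using r by (auto simp: roots_def)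
  qed
qed

text \<open>The parent of a twin is its root, so that the ancestors of a twin are just the twin
  and its root.\<close>

definition parent :: "'v \<Rightarrow> 'v" where
  "parent a = (if a \<in> twin ` roots then inv_into roots twin a else SOME b. b \<in> parent_cands a)"

lemma parent_twin: "r \<in> roots \<Longrightarrow> parent (twin r) = r"
  using inj_on_twin by (simp add: parent_def)

lemma parent_in_parent_cands:
  assumes a: "a \<in> nonroots"
  shows "parent a \<in> parent_cands a"
proof (cases "a \<in> twin ` roots")
  case True
  then show ?thesis
    using parent_twin root_parent_cand_twin by auto
next
  case False
  have "parent_cands a \<noteq> {}"
    using a by (auto simp: nonroots_def roots_def)
  then show ?thesis
    using False by (simp add: parent_def some_in_eq)
qed

lemma parent_spec:
  assumes a: "a \<in> nonroots"
  shows "parent a \<in> outer" "parent a \<noteq> a" "part (parent a) = part a"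
    "matches_of a \<subseteq> matches_of (parent a)" "rank (parent a) < rank a"
proof -
  have a_outer: "a \<in> outer"
    using a nonroots_subset by auto
  have p: "parent a \<in> part a - {a}" "matches_of a \<subseteq> matches_of (parent a)" "rank (parent a) < rank a"
    using parent_in_parent_cands[OF a] by (auto simp: parent_cands_def)
  show "parent a \<in> outer"
    using p part_subset_outer[OF a_outer] by blast
  then show "part (parent a) = part a"
    using part_eq p part_spec[OF a_outer] by blast
  show "parent a \<noteq> a" "matches_of a \<subseteq> matches_of (parent a)" "rank (parent a) < rank a"
    using p by auto
qed

definition ancestors :: "'v \<Rightarrow> 'v set" where
  "ancestors a = {c. (a, c) \<in> {(b, parent b) | b. b \<in> nonroots}\<^sup>*}"

lemma ancestors_self: "a \<in> ancestors a"
  by (simp add: ancestors_def)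

lemma ancestors_root: "r \<in> roots \<Longrightarrow> ancestors r = {r}"
  by (auto simp: ancestors_def nonroots_def elim: converse_rtranclE)

lemma ancestors_nonroot:
  assumes "a \<in> nonroots"
  shows "ancestors a = insert a (ancestors (parent a))"
proof -
  let ?R = "{(b, parent b) | b. b \<in> nonroots}"
  have "(a, parent a) \<in> ?R"
    using assms by blast
  then have "(a, c) \<in> ?R\<^sup>* \<longleftrightarrow> c = a \<or> (parent a, c) \<in> ?R\<^sup>*" for c
    by (auto elim: converse_rtranclE intro: converse_rtrancl_into_rtrancl)
  then show ?thesis
    by (auto simp: ancestors_def)
qed

lemma ancestors_outer:
  assumes "a \<in> outer" "c \<in> ancestors a"
  shows "c \<in> outer" "rank c \<le> rank a"
proof -
  have "(a, c) \<in> {(b, parent b) | b. b \<in> nonroots}\<^sup>*"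
    using assms(2) by (simp add: ancestors_def)
  then have "c \<in> outer \<and> rank c \<le> rank a"
  proof (induction rule: rtrancl_induct)
    case base
    then show ?case using assms(1) by simp
  next
    case (step y z)
    then show ?case
      using parent_spec by fastforce
  qed
  then show "c \<in> outer" "rank c \<le> rank a"
    by auto
qed

lemma ancestors_twin: "r \<in> roots \<Longrightarrow> ancestors (twin r) = {twin r, r}"
  using ancestors_nonroot[OF twin_nonroot] parent_twin ancestors_root by simp

section \<open>Brackets decided by priority\<close>

definition contenders :: "'v \<Rightarrow> 'v set" where
  "contenders x = {c \<in> outer. (c, x) \<in> E\<^sup>*}"

definition priority :: "'v set \<Rightarrow> 'v \<Rightarrow> bool \<times> bool \<times> int \<times> nat" where
  "priority S c = (c \<in> S, c \<in> S \<union> nonroots, rank c)"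

definition top_contender :: "'v set \<Rightarrow> 'v \<Rightarrow> 'v" where
  "top_contender S x = arg_max_on (priority S) (contenders x)"

definition ext_bracket :: "('v \<Rightarrow> 'v) \<Rightarrow> 'v set \<Rightarrow> 'v \<Rightarrow> 'v" where
  "ext_bracket K S x =
    (if x \<notin> V then undefined else if x \<in> Vu then K x else if x \<in> Pl then x else top_contender S x)"

lemma finite_contenders: "finite (contenders x)"
  by (rule finite_subset[OF _ finite_outer]) (auto simp: contenders_def)

lemma contenders_subset: "contenders x \<subseteq> outer"
  by (auto simp: contenders_def)

lemma inj_on_priority: "inj_on (priority S) outer"
  using inj_on_rank by (auto simp: priority_def inj_on_def)

lemma contenders_nonroot:
  assumes x: "x \<in> M - Vu"
  shows "contenders x \<inter> nonroots \<noteq> {}"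
proof -
  obtain a where a: "a \<in> outer" "(a, x) \<in> E\<^sup>*"
    using x matches_subset by (auto simp: sub_V_iff Pset_def)
  show ?thesis
  proof (cases "a \<in> nonroots")
    case True
    then show ?thesis using a by (auto simp: contenders_def)
  next
    case False
    then have r: "a \<in> roots"
      using a by (simp add: nonroots_def)
    have "x \<in> matches_of (twin a)"
      using twin_spec(2)[OF r] a x by (simp add: matches_of_def)
    then have "twin a \<in> contenders x"
      using twin_outer[OF r] by (simp add: matches_of_def contenders_def)
    then show ?thesis
      using twin_nonroot[OF r] by blast
  qed
qed

lemma top_contender_spec:
  assumes "x \<in> M - Vu"
  shows "top_contender S x \<in> contenders x" "\<And>c. c \<in> contenders x \<Longrightarrow> priority S c \<le> priority S (top_contender S x)"
  using arg_max_on_max[OF finite_contenders] contenders_nonroot[OF assms] unfolding top_contender_def by blast+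

lemma top_contender_eqI:
  assumes "c \<in> contenders x" "\<And>c'. c' \<in> contenders x \<Longrightarrow> priority S c' \<le> priority S c"
  shows "top_contender S x = c"
proof -
  have "inj_on (priority S) (contenders x)"
    using inj_on_subset[OF inj_on_priority contenders_subset] .
  then show ?thesis
    unfolding top_contender_def using arg_max_on_eqI[OF finite_contenders, of c] assms by blast
qed

lemma top_contender_in_set:
  assumes "x \<in> M - Vu" "c \<in> contenders x \<inter> S"
  shows "top_contender S x \<in> S" "rank c \<le> rank (top_contender S x)"
proof -
  have "priority S c \<le> priority S (top_contender S x)"
    using top_contender_spec(2)[OF assms(1)] assms(2) by blast
  then show "top_contender S x \<in> S" "rank c \<le> rank (top_contender S x)"
    using assms(2) by (auto simp: priority_def)
qed

lemma top_contender_nonroot: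
  assumes "x \<in> M - Vu" "contenders x \<inter> S = {}"
  shows "top_contender S x \<in> nonroots"
proof -
  obtain c where "c \<in> contenders x" "c \<in> nonroots"
    using contenders_nonroot[OF assms(1)] by blast
  then have "priority S c \<le> priority S (top_contender S x)"
    using top_contender_spec(2)[OF assms(1)] by blast
  moreover have "top_contender S x \<notin> S"
    using top_contender_spec(1)[OF assms(1)] assms(2) by blast
  ultimately show ?thesis
    using \<open>c \<in> contenders x\<close> assms(2) \<open>c \<in> nonroots\<close> by (auto simp: priority_def)
qed

lemma ext_bracket_outer: "x \<in> M - Vu \<Longrightarrow> ext_bracket K S x = top_contender S x"
  by (auto simp: ext_bracket_def matches_def)

lemma ext_bracket_Vu: "x \<in> Vu \<Longrightarrow> ext_bracket K S x = K x"
  using Vu_subset by (auto simp: ext_bracket_def)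

text \<open>Contenders only shrink along a path, so the top contender of \<open>x\<close> is also the top
  contender of the match that feeds it into \<open>x\<close>.\<close>

lemma ext_bracket_in_edge:
  assumes x: "x \<in> M - Vu"
  obtains d where "(d, x) \<in> E" "ext_bracket K S d = top_contender S x"
proof -
  let ?t = "top_contender S x"
  have t: "?t \<in> outer" "(?t, x) \<in> E\<^sup>*"
    using top_contender_spec(1)[OF x] by (auto simp: contenders_def)
  moreover have "?t \<noteq> x"
    using t x by (auto simp: matches_def)
  ultimately obtain d where d: "(?t, d) \<in> E\<^sup>*" "(d, x) \<in> E"
    by (metis rtranclE)
  have "d \<in> V" "d \<notin> Vu"
    using d E_subset outer_reaches_not_Vu t(1) by auto
  have "ext_bracket K S d = ?t"
  proof (cases "d \<in> Pl")
    case True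
    then show ?thesis
      using reachable_player_eq d \<open>d \<in> V\<close> \<open>d \<notin> Vu\<close> by (auto simp: ext_bracket_def)
  next
    case False
    then have d_outer: "d \<in> M - Vu"
      using \<open>d \<in> V\<close> \<open>d \<notin> Vu\<close> by (simp add: matches_def)
    have "contenders d \<subseteq> contenders x"
      using d by (auto simp: contenders_def)
    then have "top_contender S d = ?t"
      using top_contender_spec[OF x] t d by (intro top_contender_eqI) (auto simp: contenders_def)
    then show ?thesis
      using ext_bracket_outer[OF d_outer] by simp
  qed
  then show ?thesis
    using that d by blast
qed

lemma is_bracket_ext_bracket:
  assumes K: "K \<in> Bu"
  shows "is_bracket V E (ext_bracket K S)"
  unfolding is_bracket_def
proof (intro conjI ballI allI impI)
  fix a assume a: "a \<in> Pl"
  show "ext_bracket K S a = a"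
  proof (cases "a \<in> Vu")
    case True
    then show ?thesis
      using a K Bu_brackets players_Eu by (auto simp: ext_bracket_Vu is_bracket_def)
  next
    case False
    then show ?thesis
      using a players_subset by (auto simp: ext_bracket_def)
  qed
next
  fix x assume x: "x \<in> M"
  show "ext_bracket K S x \<in> ext_bracket K S ` in_nbrs E x"
  proof (cases "x \<in> Vu")
    case True
    then have "K x \<in> K ` in_nbrs Eu x"
      using x K Bu_brackets matches_Eu by (auto simp: is_bracket_def)
    then obtain d where "d \<in> in_nbrs E x" "K x = K d"
      using in_nbrs_Eu True by auto
    moreover have "d \<in> Vu"
      using calculation in_edge_Vu True by (auto simp: in_nbrs_def)
    ultimately have "ext_bracket K S x = ext_bracket K S d"
      using True by (simp add: ext_bracket_Vu)
    then show ?thesis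
      using \<open>d \<in> in_nbrs E x\<close> by (rule image_eqI)
  next
    case False
    then obtain d where "(d, x) \<in> E" "ext_bracket K S d = top_contender S x"
      using x ext_bracket_in_edge by blast
    then show ?thesis
      using x False by (force simp: in_nbrs_def ext_bracket_outer)
  qed
qed (simp add: ext_bracket_def)

lemma ext_bracket_cong:
  assumes x: "x \<in> M - Vu" and agree: "\<And>c. c \<in> contenders x \<Longrightarrow> c \<in> S \<longleftrightarrow> c \<in> S'"
  shows "ext_bracket K S x = ext_bracket K' S' x"
proof -
  have "priority S c = priority S' c" if "c \<in> contenders x" for c
    using agree[OF that] by (simp add: priority_def)
  then have "top_contender S' x = top_contender S x"
    using top_contender_spec[OF x, where S=S] by (intro top_contender_eqI) auto
  then show ?thesis
    using x by (simp add: ext_bracket_outer)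
qed

lemma ext_bracket_ancestors:
  assumes a: "a \<in> outer" and x: "x \<in> matches_of a"
  shows "ext_bracket K (ancestors a) x = a"
proof -
  have x_outer: "x \<in> M - Vu"
    using matches_of_outer a x by blast
  let ?t = "top_contender (ancestors a) x"
  have "a \<in> contenders x \<inter> ancestors a"
    using a x ancestors_self by (auto simp: contenders_def matches_of_def)
  then have "?t \<in> ancestors a" "rank a \<le> rank ?t"
    using top_contender_in_set[OF x_outer] by blast+
  moreover have "?t \<in> outer" "rank ?t \<le> rank a"
    using ancestors_outer[OF a calculation(1)] by auto
  ultimately have "?t = a"
    using inj_on_rank a by (auto dest: inj_onD)
  then show ?thesis
    using ext_bracket_outer[OF x_outer] by simp
qed

lemma ext_bracket_ancestors_parent:
  assumes a: "a \<in> nonroots" and x: "x \<in> M - Vu" "x \<notin> matches_of a"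
  shows "ext_bracket K (ancestors a) x = ext_bracket K (ancestors (parent a)) x"
proof (rule ext_bracket_cong[OF x(1)])
  fix c assume "c \<in> contenders x"
  then have "c \<noteq> a"
    using x by (auto simp: contenders_def matches_of_def)
  then show "c \<in> ancestors a \<longleftrightarrow> c \<in> ancestors (parent a)"
    using ancestors_nonroot[OF a] by auto
qed

lemma ext_bracket_nonroot:
  assumes "x \<in> M - Vu" "contenders x \<inter> S = {}"
  shows "ext_bracket K S x \<in> nonroots"
  using top_contender_nonroot[OF assms] ext_bracket_outer[OF assms(1)] by simp

lemma ext_bracket_ancestors_root:
  assumes r: "r \<in> roots" and x: "x \<in> M - Vu" "x \<notin> matches_of r"
  shows "ext_bracket K (ancestors r) x \<in> nonroots"
  using ext_bracket_nonroot[OF x(1)] ancestors_root[OF r] x by (auto simp: contenders_def matches_of_def)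

text \<open>The twin outranks its root and plays the same matches, so whenever the root is a
  contender, so is the twin, and the twin wins.\<close>

lemma ext_bracket_ancestors_twin:
  assumes r: "r \<in> roots" and x: "x \<in> M - Vu"
  shows "ext_bracket K (ancestors (twin r)) x \<in> nonroots"
proof (cases "contenders x \<inter> ancestors (twin r) = {}")
  case True
  then show ?thesis
    using ext_bracket_nonroot[OF x] by blast
next
  case False
  let ?t = "top_contender (ancestors (twin r)) x"
  have "?t \<in> ancestors (twin r)"
    using top_contender_in_set[OF x] False by blast
  moreover have "?t \<noteq> r"
  proof
    assume "?t = r"
    then have "r \<in> contenders x"
      using top_contender_spec(1)[OF x, where S="ancestors (twin r)"] by simp
    then have "twin r \<in> contenders x"
      using twin_spec(2)[OF r] twin_outer[OF r] x by (auto simp: contenders_def matches_of_def)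
    then have "rank (twin r) \<le> rank ?t"
      using top_contender_in_set(2)[OF x] ancestors_self by blast
    then show False
      using \<open>?t = r\<close> twin_spec(3)[OF r] by simp
  qed
  ultimately have "?t = twin r"
    using ancestors_twin[OF r] by blast
  then show ?thesis
    using twin_nonroot[OF r] ext_bracket_outer[OF x] by simp
qed

section \<open>The resolving family\<close>

definition part_bracket :: "'v set \<Rightarrow> 'v \<Rightarrow> 'v" where
  "part_bracket = (SOME f. f ` \<A> \<subseteq> Bu \<and> card (Bu - f ` \<A>) = card Bu - card \<A>)"

definition spare :: "('v \<Rightarrow> 'v) set" where
  "spare = Bu - part_bracket ` \<A>"

definition bracket_of :: "'v \<Rightarrow> 'v \<Rightarrow> 'v" where
  "bracket_of a = ext_bracket (part_bracket (part a)) (ancestors a)"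

definition family :: "('v \<Rightarrow> 'v) set" where
  "family = bracket_of ` outer \<union> (\<lambda>K. ext_bracket K {}) ` spare"

lemma bracket_of_in_family: "a \<in> outer \<Longrightarrow> bracket_of a \<in> family"
  by (simp add: family_def)

lemma part_bracket_spec: "part_bracket ` \<A> \<subseteq> Bu" "card spare = card Bu - card \<A>"
proof -
  have "\<exists>f. f ` \<A> \<subseteq> Bu \<and> card (Bu - f ` \<A>) = card Bu - card \<A>"
    using ex_map_card_Diff_image[OF finite_parts finite_Bu Bu_ne] by metis
  then show "part_bracket ` \<A> \<subseteq> Bu" "card spare = card Bu - card \<A>"
    unfolding part_bracket_def spare_def by (metis (mono_tags, lifting) someI_ex)+
qed

lemma part_bracket_in: "a \<in> outer \<Longrightarrow> part_bracket (part a) \<in> Bu"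
  using part_bracket_spec(1) part_spec by blast

lemma family_brackets: "B \<in> family \<Longrightarrow> is_bracket V E B"
  unfolding family_def bracket_of_def spare_def
  using is_bracket_ext_bracket part_bracket_in by auto

lemma ext_bracket_inj:
  assumes "K \<in> Bu" "K' \<in> Bu" "ext_bracket K S = ext_bracket K' S'"
  shows "K = K'"
proof (rule extensionalityI[OF Bu_extensional Bu_extensional])
  fix x assume "x \<in> Vu"
  then show "K x = K' x"
    using fun_cong[OF assms(3), of x] by (simp add: ext_bracket_Vu)
qed (use assms in auto)

text \<open>The sink is a match played by every outer player, and \<open>bracket_of a\<close> lets \<open>a\<close> win it.\<close>

lemma inj_on_bracket_of: "inj_on bracket_of outer"
proof
  obtain z where z: "z \<in> V" "\<And>v. v \<in> V \<Longrightarrow> (v, z) \<in> E\<^sup>*"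
    using sink_reachable by blast
  have "z \<in> matches_of a" if a: "a \<in> outer" for a
  proof -
    have "z \<notin> Pl"
    proof
      assume "z \<in> Pl"
      then have "a = z" "u = z"
        using reachable_player_eq z a u_in_V players_subset by blast+
      then show False
        using a by (simp add: Pset_def)
    qed
    then show ?thesis
      using z a players_subset by (auto simp: matches_of_def matches_def)
  qed
  then have "bracket_of a z = a" if "a \<in> outer" for a
    using ext_bracket_ancestors that by (simp add: bracket_of_def)
  then show "a = b" if "a \<in> outer" "b \<in> outer" "bracket_of a = bracket_of b" for a b
    using that by metis
qed

lemma card_family: "card family = card outer + (card Bu - card \<A>)"
proof -
  have "inj_on (\<lambda>K. ext_bracket K {}) spare"
    using ext_bracket_inj by (auto simp: spare_def inj_on_def)
  moreover have "bracket_of a \<noteq> ext_bracket K {}" if a: "a \<in> outer" and K: "K \<in> spare" for a K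
  proof
    assume "bracket_of a = ext_bracket K {}"
    then have "part_bracket (part a) = K"
      using ext_bracket_inj part_bracket_in[OF a] K by (auto simp: bracket_of_def spare_def)
    then show False
      using K part_spec[OF a] by (auto simp: spare_def)
  qed
  then have "bracket_of ` outer \<inter> (\<lambda>K. ext_bracket K {}) ` spare = {}"
    by blast
  moreover have "finite spare"
    using finite_Bu by (simp add: spare_def)
  ultimately show ?thesis
    unfolding family_def using finite_outer inj_on_bracket_of part_bracket_spec(2)
    by (simp add: card_Un_disjoint card_image)
qed

lemma score_ext_bracket:
  "score V E \<sigma> (ext_bracket K S) X =
     score Vu Eu \<sigma> K (restrict X Vu) + (\<Sum>x\<in>M - Vu. if ext_bracket K S x = X x then \<sigma> x else 0)"
proof -
  have "{x \<in> M \<inter> Vu. K x = restrict X Vu x} = {x \<in> M \<inter> Vu. K x = X x}"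
    by auto
  then have "score Vu Eu \<sigma> K (restrict X Vu) = sum \<sigma> {x \<in> M \<inter> Vu. K x = X x}"
    by (simp only: score_def matches_Eu)
  also have "\<dots> = (\<Sum>x\<in>M \<inter> Vu. if K x = X x then \<sigma> x else 0)"
    by (rule sum.inter_filter) (simp add: finite_M)
  also have "\<dots> = (\<Sum>x\<in>M \<inter> Vu. if ext_bracket K S x = X x then \<sigma> x else 0)"
    by (intro sum.cong) (auto simp: ext_bracket_Vu)
  finally show ?thesis
    unfolding score_eq_sum using sum.Int_Diff[OF finite_M] by simp
qed

lemma score_bracket_of_diff_parent:
  assumes a: "a \<in> nonroots"
  shows "score V E \<sigma> (bracket_of a) X - score V E \<sigma> (bracket_of (parent a)) X
       = sum \<sigma> (wins X a \<inter> matches_of a) - sum \<sigma> (wins X (parent a) \<inter> matches_of a)"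
proof -
  let ?p = "parent a"
  have a_outer: "a \<in> outer"
    using a nonroots_subset by blast
  have on_matches: "bracket_of a x = a" "bracket_of ?p x = ?p" if "x \<in> matches_of a" for x
    using that ext_bracket_ancestors[OF a_outer] ext_bracket_ancestors[OF parent_spec(1)[OF a]] parent_spec(4)[OF a]
    by (auto simp: bracket_of_def)
  have elsewhere: "bracket_of a x = bracket_of ?p x" if "x \<in> M" "x \<notin> matches_of a" for x
  proof (cases "x \<in> Vu")
    case True
    then show ?thesis
      using parent_spec(3)[OF a] by (simp add: bracket_of_def ext_bracket_Vu)
  next
    case False
    then show ?thesis
      using ext_bracket_ancestors_parent[OF a] that parent_spec(3)[OF a] by (simp add: bracket_of_def)
  qed
  have "score V E \<sigma> (bracket_of a) X - score V E \<sigma> (bracket_of ?p) X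
      = (\<Sum>x\<in>M. if x \<in> matches_of a
           then (if X x = a then \<sigma> x else 0) - (if X x = ?p then \<sigma> x else 0) else 0)"
    unfolding score_eq_sum sum_subtractf[symmetric]
    using on_matches elsewhere by (intro sum.cong) auto
  also have "\<dots> = (\<Sum>x\<in>M \<inter> matches_of a. (if X x = a then \<sigma> x else 0) - (if X x = ?p then \<sigma> x else 0))"
    by (rule sum.inter_restrict[OF finite_M, symmetric])
  also have "M \<inter> matches_of a = matches_of a"
    by (auto simp: matches_of_def)
  also have "(\<Sum>x\<in>matches_of a. (if X x = a then \<sigma> x else 0) - (if X x = ?p then \<sigma> x else 0))
      = sum \<sigma> (wins X a \<inter> matches_of a) - sum \<sigma> (wins X ?p \<inter> matches_of a)"
    by (simp add: sum_subtractf sum_if_eq_wins)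
  finally show ?thesis .
qed

text \<open>A non-root and its parent never both win a match of the non-root, so the score
  difference of their brackets reveals the total weight of the non-root's wins.\<close>

lemma sum_wins_nonroot:
  assumes \<sigma>: "\<And>x. x \<in> M \<Longrightarrow> \<sigma> x > 0" and X: "is_bracket V E X" and a: "a \<in> nonroots"
  shows "sum \<sigma> (wins X a) = max 0 (score V E \<sigma> (bracket_of a) X - score V E \<sigma> (bracket_of (parent a)) X)"
proof -
  let ?p = "parent a"
  have "wins X a \<inter> matches_of a = wins X a"
    using wins_subset_matches_of[OF X] by blast
  moreover have "sum \<sigma> (wins X ?p \<inter> matches_of a) \<ge> 0"
    using \<sigma> by (intro sum_nonneg) (auto simp: wins_def less_imp_le)
  moreover have "sum \<sigma> (wins X a) \<ge> 0"
    using \<sigma> by (intro sum_nonneg) (auto simp: wins_def less_imp_le)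
  moreover have "wins X a = {} \<or> wins X ?p \<inter> matches_of a = {}"
    using not_both_win_matches_of[OF X parent_spec(4)[OF a]] parent_spec(2)[OF a] calculation(1) by metis
  ultimately show ?thesis
    using score_bracket_of_diff_parent[OF a] by auto
qed

lemma score_bracket_of_root:
  assumes r: "r \<in> roots" and X: "is_bracket V E X"
  shows "score V E \<sigma> (bracket_of r) X =
     score Vu Eu \<sigma> (part_bracket (part r)) (restrict X Vu)
     + (\<Sum>x\<in>M - Vu - matches_of r. if bracket_of r x = X x then \<sigma> x else 0)
     + sum \<sigma> (wins X r)"
proof -
  have r_outer: "r \<in> outer"
    using r roots_subset by blast
  have sub: "matches_of r \<subseteq> M - Vu"
    using matches_of_outer[OF r_outer] .
  have "(\<Sum>x\<in>matches_of r. if bracket_of r x = X x then \<sigma> x else 0) = sum \<sigma> (wins X r)"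
  proof -
    have "(\<Sum>x\<in>matches_of r. if bracket_of r x = X x then \<sigma> x else 0)
        = (\<Sum>x\<in>matches_of r. if X x = r then \<sigma> x else 0)"
      using ext_bracket_ancestors[OF r_outer] by (intro sum.cong) (auto simp: bracket_of_def)
    also have "\<dots> = sum \<sigma> (wins X r \<inter> matches_of r)"
      by (rule sum_if_eq_wins)
    also have "wins X r \<inter> matches_of r = wins X r"
      using wins_subset_matches_of[OF X] by blast
    finally show ?thesis .
  qed
  then show ?thesis
    using score_ext_bracket[of \<sigma> "part_bracket (part r)" "ancestors r" X]
      sum.subset_diff[OF sub finite_Diff[OF finite_M], of "\<lambda>x. if bracket_of r x = X x then \<sigma> x else 0"]
    by (simp add: bracket_of_def)
qed

lemma part_has_root:
  assumes A: "A \<in> \<A>"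
  obtains r where "r \<in> roots" "part r = A"
proof -
  have "finite A"
    using finite_subset[OF parts_subset_outer[OF A] finite_outer] .
  moreover have "A \<noteq> {}"
    using A A_nonempty by blast
  ultimately have "Min (rank ` A) \<in> rank ` A"
    by simp
  then obtain r where r: "r \<in> A" "rank r = Min (rank ` A)"
    by auto
  then have r_min: "rank r \<le> rank b" if "b \<in> A" for b
    using that \<open>finite A\<close> by simp
  have r_outer: "r \<in> outer"
    using r A parts_subset_outer by blast
  then have "part r = A"
    using part_eq A r by blast
  then have "parent_cands r = {}"
    using r_min by (auto simp: parent_cands_def not_less[symmetric])
  then have "r \<in> roots"
    using r_outer by (simp add: roots_def)
  then show ?thesis
    using that \<open>part r = A\<close> by blast
qed

lemma bracket_winner_inner:
  assumes X: "is_bracket V E X" and x: "x \<in> V - Vu" and "X x \<notin> outer"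
  shows "X x = X u"
proof -
  have winner_x: "(X x, x) \<in> E\<^sup>*" "X x \<in> Pl"
    using bracket_winner_reaches[OF wf_E E_subset X] x by auto
  then have winner_u: "(X x, u) \<in> E\<^sup>*"
    using assms(3) by (simp add: Pset_def)
  have "(x, u) \<notin> E\<^sup>*"
  proof
    assume "(x, u) \<in> E\<^sup>*"
    then have "Pset V E x \<subseteq> Pset V E u"
      by (rule Pset_mono)
    then show False
      using x by (simp add: sub_V_iff)
  qed
  then have "(u, x) \<in> E\<^sup>*"
    using reachable_linear[OF winner_x(1) winner_u] by blast
  then have "X u = X x"
    using bracket_wins_below[OF X _ refl winner_u] x by blast
  then show ?thesis
    by simp
qed

end

locale indistinguishable_pair = bracket_extension V E u Bu \<A> for V :: "'v set" and E u Bu \<A> +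
  fixes \<sigma> :: "'v \<Rightarrow> real" and B B' :: "'v \<Rightarrow> 'v"
  assumes scoring: "scoring_system V E \<sigma>"
    and resolving_Bu: "resolving Vu Eu \<sigma> Bu"
    and bracket_B: "is_bracket V E B" and bracket_B': "is_bracket V E B'"
    and same_scores: "\<And>f. f \<in> family \<Longrightarrow> score V E \<sigma> f B = score V E \<sigma> f B'"
begin

lemma \<sigma>_pos: "x \<in> M \<Longrightarrow> \<sigma> x > 0"
  using scoring by (simp add: scoring_system_def)

lemma wins_eqI:
  assumes "sum \<sigma> (wins B c) = sum \<sigma> (wins B' c)"
  shows "wins B c = wins B' c"
proof (rule nested_eq_if_sum_eq[OF finite_wins finite_wins _ wins_nested[OF bracket_B bracket_B'] assms])
  show "\<sigma> x > 0" if "x \<in> wins B c \<union> wins B' c" for x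
    using that \<sigma>_pos by (auto simp: wins_def)
qed

lemma wins_eq_nonroot:
  assumes a: "a \<in> nonroots"
  shows "wins B a = wins B' a"
proof (rule wins_eqI)
  have "a \<in> outer" "parent a \<in> outer"
    using a nonroots_subset parent_spec(1) by auto
  then have "score V E \<sigma> (bracket_of a) B = score V E \<sigma> (bracket_of a) B'"
    "score V E \<sigma> (bracket_of (parent a)) B = score V E \<sigma> (bracket_of (parent a)) B'"
    using same_scores bracket_of_in_family by blast+
  then show "sum \<sigma> (wins B a) = sum \<sigma> (wins B' a)"
    using sum_wins_nonroot[OF \<sigma>_pos bracket_B a] sum_wins_nonroot[OF \<sigma>_pos bracket_B' a] by simp
qed

lemma sum_eq_if_nonroot_winners:
  assumes "D \<subseteq> M" "\<And>x. x \<in> D \<Longrightarrow> f x \<in> nonroots"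
  shows "(\<Sum>x\<in>D. if f x = B x then \<sigma> x else 0) = (\<Sum>x\<in>D. if f x = B' x then \<sigma> x else 0)"
proof (rule sum.cong[OF refl])
  fix x assume "x \<in> D"
  then have "wins B (f x) = wins B' (f x)"
    using assms(2) wins_eq_nonroot by blast
  then have "x \<in> wins B (f x) \<longleftrightarrow> x \<in> wins B' (f x)"
    by simp
  moreover have "x \<in> M"
    using \<open>x \<in> D\<close> assms(1) by blast
  ultimately have "B x = f x \<longleftrightarrow> B' x = f x"
    by (simp only: wins_iff)
  then show "(if f x = B x then \<sigma> x else 0) = (if f x = B' x then \<sigma> x else 0)"
    by (cases "B x = f x") auto
qed

lemma inner_score_eqI:
  assumes "ext_bracket K S \<in> family" "\<And>x. x \<in> M - Vu \<Longrightarrow> ext_bracket K S x \<in> nonroots"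
  shows "score Vu Eu \<sigma> K (restrict B Vu) = score Vu Eu \<sigma> K (restrict B' Vu)"
proof -
  have "(\<Sum>x\<in>M - Vu. if ext_bracket K S x = B x then \<sigma> x else 0)
      = (\<Sum>x\<in>M - Vu. if ext_bracket K S x = B' x then \<sigma> x else 0)"
    using assms(2) by (intro sum_eq_if_nonroot_winners) auto
  then show ?thesis
    using same_scores[OF assms(1)] score_ext_bracket[of \<sigma> K S B] score_ext_bracket[of \<sigma> K S B']
    by linarith
qed

lemma inner_score_eq_root:
  assumes r: "r \<in> roots"
  shows "score Vu Eu \<sigma> (part_bracket (part r)) (restrict B Vu)
       = score Vu Eu \<sigma> (part_bracket (part r)) (restrict B' Vu)"
proof (rule inner_score_eqI)
  have "bracket_of (twin r) = ext_bracket (part_bracket (part r)) (ancestors (twin r))"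
    using part_twin[OF r] by (simp add: bracket_of_def)
  then show "ext_bracket (part_bracket (part r)) (ancestors (twin r)) \<in> family"
    using bracket_of_in_family[OF twin_outer[OF r]] by simp
qed (rule ext_bracket_ancestors_twin[OF r])

lemma wins_eq_root:
  assumes r: "r \<in> roots"
  shows "wins B r = wins B' r"
proof (rule wins_eqI)
  have "bracket_of r x \<in> nonroots" if "x \<in> M - Vu - matches_of r" for x
    using ext_bracket_ancestors_root[OF r] that by (simp add: bracket_of_def)
  then have "(\<Sum>x\<in>M - Vu - matches_of r. if bracket_of r x = B x then \<sigma> x else 0)
      = (\<Sum>x\<in>M - Vu - matches_of r. if bracket_of r x = B' x then \<sigma> x else 0)"
    by (intro sum_eq_if_nonroot_winners) auto
  moreover have "score V E \<sigma> (bracket_of r) B = score V E \<sigma> (bracket_of r) B'"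
    using same_scores bracket_of_in_family r roots_subset by blast
  ultimately show "sum \<sigma> (wins B r) = sum \<sigma> (wins B' r)"
    using score_bracket_of_root[OF r bracket_B, where \<sigma>=\<sigma>] score_bracket_of_root[OF r bracket_B', where \<sigma>=\<sigma>]
      inner_score_eq_root[OF r] by linarith
qed

lemma wins_eq_outer:
  assumes "c \<in> outer"
  shows "wins B c = wins B' c"
proof (cases "c \<in> roots")
  case True
  then show ?thesis by (rule wins_eq_root)
next
  case False
  then show ?thesis
    using assms wins_eq_nonroot by (simp add: nonroots_def)
qed

lemma inner_score_eq:
  assumes K: "K \<in> Bu"
  shows "score Vu Eu \<sigma> K (restrict B Vu) = score Vu Eu \<sigma> K (restrict B' Vu)"
proof (cases "K \<in> spare")
  case True
  show ?thesis
  proof (rule inner_score_eqI[where S="{}"])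
    show "ext_bracket K {} \<in> family"
      using True by (simp add: family_def)
  qed (rule ext_bracket_nonroot; simp)
next
  case False
  then obtain A where "A \<in> \<A>" "K = part_bracket A"
    using K by (auto simp: spare_def)
  moreover obtain r where "r \<in> roots" "part r = A"
    using part_has_root calculation(1) by blast
  ultimately show ?thesis
    using inner_score_eq_root[of r] by simp
qed

lemma restrict_eq: "restrict B Vu = restrict B' Vu"
proof (rule ccontr)
  assume "restrict B Vu \<noteq> restrict B' Vu"
  then obtain K where "K \<in> Bu" "score Vu Eu \<sigma> K (restrict B Vu) \<noteq> score Vu Eu \<sigma> K (restrict B' Vu)"
    using resolving_Bu[unfolded resolving_def] bracket_restrict[OF bracket_B] bracket_restrict[OF bracket_B']
    by blast
  then show False
    using inner_score_eq by simp
qed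

lemma winner_eq_if_outer:
  assumes x: "x \<in> M" and "B x \<in> outer \<or> B' x \<in> outer"
  shows "B x = B' x"
proof (cases "B x \<in> outer")
  case True
  have "x \<in> wins B (B x)"
    using wins_iff[OF x] by simp
  then have "x \<in> wins B' (B x)"
    using wins_eq_outer[OF True] by simp
  then show ?thesis
    using wins_iff[OF x] by simp
next
  case False
  then have outer: "B' x \<in> outer"
    using assms(2) by blast
  have "x \<in> wins B' (B' x)"
    using wins_iff[OF x] by simp
  then have "x \<in> wins B (B' x)"
    using wins_eq_outer[OF outer] by simp
  then show ?thesis
    using wins_iff[OF x] by simp
qed

lemma brackets_eq: "B = B'"
proof
  fix x
  show "B x = B' x"
  proof (cases "x \<in> M - Vu")
    case True
    then have x: "x \<in> V - Vu"
      using matches_subset by blast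
    consider "B x \<in> outer \<or> B' x \<in> outer" | "B x \<notin> outer" "B' x \<notin> outer"
      by blast
    then show ?thesis
    proof cases
      case 1
      then show ?thesis
        using winner_eq_if_outer True by blast
    next
      case 2
      have "B u = B' u"
        using fun_cong[OF restrict_eq, of u] u_in_Vu by simp
      then show ?thesis
        using bracket_winner_inner[OF bracket_B x 2(1)] bracket_winner_inner[OF bracket_B' x 2(2)]
        by simp
    qed
  next
    case False
    then consider "x \<in> Vu" | "x \<in> Pl" | "x \<notin> V"
      by (auto simp: matches_def)
    then show ?thesis
    proof cases
      case 1
      then show ?thesis
        using fun_cong[OF restrict_eq, of x] by simp
    qed (use bracket_B bracket_B' in \<open>simp_all add: is_bracket_def\<close>)
  qed
qed

end

lemma (in bracket_extension) family_resolving: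
  assumes "scoring_system V E \<sigma>" "resolving Vu Eu \<sigma> Bu"
  shows "resolving V E \<sigma> family"
  unfolding resolving_def
proof (intro allI impI)
  fix B B' assume B: "is_bracket V E B" "is_bracket V E B'" "B \<noteq> B'"
  show "\<exists>Bi\<in>family. score V E \<sigma> Bi B \<noteq> score V E \<sigma> Bi B'"
  proof (rule ccontr)
    assume "\<not> ?thesis"
    then have "score V E \<sigma> f B = score V E \<sigma> f B'" if "f \<in> family" for f
      using that by blast
    then interpret indistinguishable_pair V E u Bu \<A> \<sigma> B B'
      using assms B by unfold_locales
    show False
      using brackets_eq \<open>B \<noteq> B'\<close> by blast
  qed
qed

theorem proposition5p11:
  fixes V :: "'v set" and E :: "('v \<times> 'v) set" and u :: 'v
    and Bu :: "('v \<Rightarrow> 'v) set" and \<A> :: "'v set set"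
  assumes T: "is_SET V E"
    and u: "u \<in> V"
    and Bu_brackets: "\<forall>B\<in>Bu. is_bracket (sub_V V E u) (sub_E V E u) B"
    and Bu_ne: "Bu \<noteq> {}"
    and A_part: "\<Union>\<A> = players V E - Pset V E u"
    and A_nonempty: "\<forall>A\<in>\<A>. A \<noteq> {}"
    and A_disj: "\<forall>A\<in>\<A>. \<forall>A'\<in>\<A>. A \<noteq> A' \<longrightarrow> A \<inter> A' = {}"
    and A_cond: "\<forall>a\<in>players V E - Pset V E u. \<forall>A\<in>\<A>. a \<in> A \<longrightarrow>
         (\<exists>b\<in>A - {a}. \<forall>x\<in>matches V E. a \<in> Pset V E x \<longrightarrow> b \<in> Pset V E x)"
  shows "\<exists>\<B>. (\<forall>B\<in>\<B>. is_bracket V E B)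
     \<and> int (card \<B>) = int (card (players V E - Pset V E u))
                        + max 0 (int (card Bu) - int (card \<A>))
     \<and> (\<forall>\<sigma>. scoring_system V E \<sigma> \<longrightarrow>
           resolving (sub_V V E u) (sub_E V E u) \<sigma> Bu \<longrightarrow> resolving V E \<sigma> \<B>)"
proof -
  interpret bracket_extension V E u Bu \<A>
    using assms by unfold_locales auto
  show ?thesis
  proof (intro exI conjI allI impI ballI)
    show "is_bracket V E B" if "B \<in> family" for B
      using family_brackets that .
    show "int (card family) = int (card (players V E - Pset V E u)) + max 0 (int (card Bu) - int (card \<A>))"
      using card_family by simp
    show "resolving V E \<sigma> family" if "scoring_system V E \<sigma>" "resolving Vu Eu \<sigma> Bu" for \<sigma>
      using family_resolving that .
  qed
qed

end
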